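(* Let $f\in C^1([0,1],\mathbb{R})$ satisfy $f(0)=f(1)=0$, $f(s)>0$ for all $s\in(0,1)$, $f'(1)<0$, and suppose there exist $s_0\in(0,1)$, $K\ge 0$, $\alpha>0$ and $r>0$ such that $f(s)\le r\frac{s}{(1+|\ln s|)^\alpha}$ for all $s\in(0,1)$ and $f(s)\ge r\frac{s}{(1+|\ln s|)^\alpha}(1-Ks)$ for all $s\in(0,s_0]$. Let $u_0:\mathbb{R}\to[0,1]$ be uniformly continuous with $u_0>0$ on $\mathbb{R}$, $\liminf_{x\to-\infty}u_0>0$, $\lim_{x\to+\infty}u_0=0$, of class $C^2$ and nonincreasing on $[\xi_0,+\infty)$ for some $\xi_0>0$, and such that $\varphi_0:=-\ln u_0$ satisfies $\varphi_0'=o(\varphi_0^{-\alpha})$ and $\varphi_0''=o(\varphi_0')$ as $x\to+\infty$. Let $\varepsilon>0$ and $\rho$ with $\max\{r-\frac{\varepsilon}{2},\frac34 r\}<\rho<r$. Define $$w(t,x):=\exp\Big\{1-\big[(1+\varphi_0(x))^{\alpha+1}-\rho(\alpha+1)t\big]^{\frac{1}{\alpha+1}}\Big\},\qquad x_0(t):=\sup\Big\{x: u_0(x)=\exp\big(1-(\rho(\alpha+1)t+1)^{\frac{1}{\alpha+1}}\big)\Big\},$$ $\xi_1:=\max\{\xi_0,x_0(0)\}$, $\zeta:=\inf_{x<\xi_1}u_0(x)\in(0,1]$, and for $M\ge \max\{\frac{1}{2\zeta},\frac{1}{4s_0}\}$ let $g(y):=y(1-My)$, $$x_M(t):=\sup\Big\{x\in\mathbb{R}: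 u_0(x)=\exp\Big\{1-\big((1+\ln(2M))^{\alpha+1}+\rho(\alpha+1)t\big)^{\frac{1}{\alpha+1}}\Big\}\Big\},$$ and $v(t,x):=\frac{1}{4M}$ for $x\le x_M(t)$, $v(t,x):=g(w(t,x))$ for $x>x_M(t)$. Then there exists $M$ large enough such that $v$ is a subsolution of $u_t=u_{xx}+f(u)$ for all $t>0$ and $x\in\mathbb{R}$, i.e. $v_t-v_{xx}-f(v)\le 0$ on each of the regions $\{x\le x_M(t)\}$ and $\{x>x_M(t)\}$.
   Context: One has $w(t,x_M(t))=\frac{1}{2M}$ and $w(t,x)<\frac{1}{2M}$ for $x>x_M(t)$, so $v$ is continuous and $0<v\le s_0$. *)

theory Defs
  imports "HOL-Analysis.Analysis" "HOL-Library.Landau_Symbols"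
begin

definition phi0 :: "(real \<Rightarrow> real) \<Rightarrow> real \<Rightarrow> real" where
  "phi0 u0 x = - ln (u0 x)"

definition wfun :: "(real \<Rightarrow> real) \<Rightarrow> real \<Rightarrow> real \<Rightarrow> real \<Rightarrow> real \<Rightarrow> real" where
  "wfun u0 \<alpha> \<rho> t x =
     exp (1 - ((1 + phi0 u0 x) powr (\<alpha> + 1) - \<rho> * (\<alpha> + 1) * t) powr (1 / (\<alpha> + 1)))"

definition x0fun :: "(real \<Rightarrow> real) \<Rightarrow> real \<Rightarrow> real \<Rightarrow> real \<Rightarrow> real" where
  "x0fun u0 \<alpha> \<rho> t =
     Sup {x. u0 x = exp (1 - (\<rho> * (\<alpha> + 1) * t + 1) powr (1 / (\<alpha> + 1)))}"

definition xMfun :: "(real \<Rightarrow> real) \<Rightarrow> real \<Rightarrow> real \<Rightarrow> real \<Rightarrow> real \<Rightarrow> real" where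
  "xMfun u0 \<alpha> \<rho> M t =
     Sup {x. u0 x = exp (1 - ((1 + ln (2 * M)) powr (\<alpha> + 1) + \<rho> * (\<alpha> + 1) * t) powr (1 / (\<alpha> + 1)))}"

definition gfun :: "real \<Rightarrow> real \<Rightarrow> real" where
  "gfun M y = y * (1 - M * y)"

definition vfun :: "(real \<Rightarrow> real) \<Rightarrow> real \<Rightarrow> real \<Rightarrow> real \<Rightarrow> real \<Rightarrow> real \<Rightarrow> real" where
  "vfun u0 \<alpha> \<rho> M t x =
     (if x \<le> xMfun u0 \<alpha> \<rho> M t then 1 / (4 * M) else gfun M (wfun u0 \<alpha> \<rho> t x))"

definition subsol_at :: "(real \<Rightarrow> real) \<Rightarrow> (real \<Rightarrow> real \<Rightarrow> real) \<Rightarrow> real \<Rightarrow> real \<Rightarrow> bool" where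
  "subsol_at f V t x \<longleftrightarrow>
     (\<exists>Vt Vx Vxx. ((\<lambda>s. V s x) has_real_derivative Vt) (at t)
        \<and> (\<forall>\<^sub>F y in nhds x. (V t has_real_derivative Vx y) (at y))
        \<and> (Vx has_real_derivative Vxx) (at x)
        \<and> Vt - Vxx - f (V t x) \<le> 0)"

end

theory Submission
  imports Defs "HOL-Real_Asymp.Real_Asymp"
begin

(*
  Write w = exp (1 - F) with F = [(1 + phi0)^(alpha+1) - rho (alpha+1) t]^(1/(alpha+1)). Then
  w_t = rho F^(-alpha) w, which is the leading term r s / (1 + |ln s|)^alpha of f at s = w
  (where |ln w| = F - 1) with r lowered to rho. Far to the right, phi0' = o(phi0^(-alpha)) and
  phi0'' = o(phi0') make the x-derivatives of F so small that the diffusion term of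
  v = g(w) = w (1 - M w) costs at most (r - rho)/2 F^(-alpha) w. For M large the region
  x > x_M(t) lies in that range, and there w < 1/(2M), so M w <= 1/2 and K v <= M w / 2.
  The lower bound on f then dominates v_t - v_xx, because 5 rho >= 3 r leaves room for the
  factors (1 - M w) and (1 - K v). On x <= x_M(t), v is the constant 1/(4M) and f(1/(4M)) > 0.
*)

definition wexponent :: "real \<Rightarrow> real \<Rightarrow> real \<Rightarrow> real \<Rightarrow> real" where
  "wexponent \<alpha> \<rho> t p = ((1 + p) powr (\<alpha> + 1) - \<rho> * (\<alpha> + 1) * t) powr (1 / (\<alpha> + 1))"

lemma wfun_eq_exp_wexponent: "wfun u0 \<alpha> \<rho> t x = exp (1 - wexponent \<alpha> \<rho> t (phi0 u0 x))"
  by (simp add: wfun_def wexponent_def)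

section \<open>Derivatives\<close>

lemma DERIV_powr_inverse_succ:
  fixes Q :: "real \<Rightarrow> real"
  assumes "(Q has_real_derivative q) (at y)" "Q y > 0" "\<alpha> + 1 \<noteq> 0"
  shows "((\<lambda>y. Q y powr (1 / (\<alpha> + 1))) has_real_derivative
           (Q y powr (1 / (\<alpha> + 1))) powr (- \<alpha>) * q / (\<alpha> + 1)) (at y)"
proof -
  have "(Q y powr (1 / (\<alpha> + 1))) powr (- \<alpha>) = Q y powr (1 / (\<alpha> + 1) - 1)"
    using assms(3) by (simp add: powr_powr field_simps)
  then show ?thesis
    using DERIV_fun_powr[OF assms(1,2), of "1 / (\<alpha> + 1)"] by simp
qed

lemma wexponent_has_derivative_time:
  assumes "\<alpha> > 0" and "(1 + p) powr (\<alpha> + 1) - \<rho> * (\<alpha> + 1) * t > 0"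
  shows "((\<lambda>s. wexponent \<alpha> \<rho> s p) has_real_derivative - \<rho> * wexponent \<alpha> \<rho> t p powr (- \<alpha>)) (at t)"
proof -
  have "((\<lambda>s. (1 + p) powr (\<alpha> + 1) - \<rho> * (\<alpha> + 1) * s) has_real_derivative - \<rho> * (\<alpha> + 1)) (at t)"
    by (auto intro!: derivative_eq_intros)
  from DERIV_powr_inverse_succ[OF this assms(2), of \<alpha>] show ?thesis
    using assms(1) by (simp add: wexponent_def[abs_def] mult.commute)
qed

lemma wexponent_has_derivative_space:
  assumes "\<alpha> > 0" and "1 + p > 0" and "(1 + p) powr (\<alpha> + 1) - \<rho> * (\<alpha> + 1) * t > 0"
  shows "(wexponent \<alpha> \<rho> t has_real_derivative wexponent \<alpha> \<rho> t p powr (- \<alpha>) * (1 + p) powr \<alpha>) (at p)"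
proof -
  have "((\<lambda>p. (1 + p) powr (\<alpha> + 1) - \<rho> * (\<alpha> + 1) * t) has_real_derivative (\<alpha> + 1) * (1 + p) powr \<alpha>) (at p)"
    using DERIV_fun_powr[of "\<lambda>p. 1 + p" 1 p, of "\<alpha> + 1"] assms(2)
    by (auto intro!: derivative_eq_intros)
  from DERIV_powr_inverse_succ[OF this assms(3), of \<alpha>] show ?thesis
    using assms(1) by (simp add: wexponent_def[abs_def])
qed

lemma wexponent_comp_has_derivative:
  assumes "\<alpha> > 0" and "(P has_real_derivative p1) (at x)"
    and "1 + P x > 0" and "(1 + P x) powr (\<alpha> + 1) - \<rho> * (\<alpha> + 1) * t > 0"
  shows "((\<lambda>y. wexponent \<alpha> \<rho> t (P y)) has_real_derivative
           wexponent \<alpha> \<rho> t (P x) powr (- \<alpha>) * (1 + P x) powr \<alpha> * p1) (at x)"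
  using DERIV_chain2[OF wexponent_has_derivative_space[OF assms(1,3,4)] assms(2)] .

lemma wexponent_comp_has_second_derivative:
  fixes P p1 :: "real \<Rightarrow> real"
  assumes \<alpha>: "\<alpha> > 0"
    and dP: "(P has_real_derivative p1 x) (at x)" and dp1: "(p1 has_real_derivative p2) (at x)"
    and pos: "1 + P x > 0" "(1 + P x) powr (\<alpha> + 1) - \<rho> * (\<alpha> + 1) * t > 0"
  defines "F \<equiv> \<lambda>y. wexponent \<alpha> \<rho> t (P y)"
  shows "((\<lambda>y. F y powr (- \<alpha>) * (1 + P y) powr \<alpha> * p1 y) has_real_derivative
           (- \<alpha> * F x powr (- \<alpha> - 1) * (F x powr (- \<alpha>) * (1 + P x) powr \<alpha> * p1 x))
             * (1 + P x) powr \<alpha> * p1 x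
           + F x powr (- \<alpha>) * (\<alpha> * (1 + P x) powr (\<alpha> - 1) * p1 x) * p1 x
           + F x powr (- \<alpha>) * (1 + P x) powr \<alpha> * p2) (at x)"
proof -
  have dF: "(F has_real_derivative F x powr (- \<alpha>) * (1 + P x) powr \<alpha> * p1 x) (at x)"
    unfolding F_def by (rule wexponent_comp_has_derivative[OF \<alpha> dP pos])
  have "F x > 0"
    using pos(2) by (simp add: F_def wexponent_def)
  have dE: "((\<lambda>y. 1 + P y) has_real_derivative p1 x) (at x)"
    using dP by (auto intro!: derivative_eq_intros)
  show ?thesis
    using DERIV_mult[OF DERIV_mult[OF DERIV_fun_powr[OF dF \<open>F x > 0\<close>, of "- \<alpha>"]
          DERIV_fun_powr[OF dE pos(1), of \<alpha>]] dp1]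
    by (simp add: algebra_simps)
qed

lemma has_derivative_gfun_exp:
  assumes "(F has_real_derivative D) (at y)"
  shows "((\<lambda>y. gfun M (exp (1 - F y))) has_real_derivative
           (1 - 2 * M * exp (1 - F y)) * (- exp (1 - F y) * D)) (at y)"
  unfolding gfun_def by (rule derivative_eq_intros assms refl)+ (simp add: algebra_simps)

lemma has_second_derivative_gfun_exp:
  assumes "(F has_real_derivative Fx x) (at x)" and "(Fx has_real_derivative Fxx) (at x)"
  shows "((\<lambda>y. (1 - 2 * M * exp (1 - F y)) * (- exp (1 - F y) * Fx y)) has_real_derivative
           (1 - 4 * M * exp (1 - F x)) * exp (1 - F x) * (Fx x)\<^sup>2
           - (1 - 2 * M * exp (1 - F x)) * exp (1 - F x) * Fxx) (at x)"
  by (rule derivative_eq_intros assms refl)+ (simp add: algebra_simps power2_eq_square)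

lemma phi0_has_derivatives:
  assumes d1: "\<forall>x\<in>{\<xi>0..}. (u0 has_real_derivative u1 x) (at x within {\<xi>0..})"
    and d2: "\<forall>x\<in>{\<xi>0..}. (u1 has_real_derivative u2 x) (at x within {\<xi>0..})"
    and pos: "\<forall>x. u0 x > 0" and y: "y > \<xi>0"
  shows "(phi0 u0 has_real_derivative deriv (phi0 u0) y) (at y)"
    and "(deriv (phi0 u0) has_real_derivative deriv (deriv (phi0 u0)) y) (at y)"
proof -
  have D1: "(u0 has_real_derivative u1 z) (at z)" and D2: "(u1 has_real_derivative u2 z) (at z)"
    if "z > \<xi>0" for z
  proof -
    have "at z within {\<xi>0..} = at z"
      using that by (intro at_within_interior) simp
    then show "(u0 has_real_derivative u1 z) (at z)" "(u1 has_real_derivative u2 z) (at z)"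
      using d1[rule_format, of z] d2[rule_format, of z] that by auto
  qed
  have P: "(phi0 u0 has_real_derivative - (u1 z / u0 z)) (at z)" if "z > \<xi>0" for z
    unfolding phi0_def[abs_def] using D1[OF that] pos by (auto intro!: derivative_eq_intros)
  have dP: "deriv (phi0 u0) z = - (u1 z / u0 z)" if "z > \<xi>0" for z
    using P[OF that] by (rule DERIV_imp_deriv)
  show "(phi0 u0 has_real_derivative deriv (phi0 u0) y) (at y)"
    using P[OF y] dP[OF y] by simp
  have "((\<lambda>z. - (u1 z / u0 z)) has_real_derivative - ((u2 y * u0 y - u1 y * u1 y) / (u0 y * u0 y))) (at y)"
    using D1[OF y] D2[OF y] pos[rule_format, of y]
    by (auto intro!: derivative_eq_intros simp: field_simps power2_eq_square)
  then have "(deriv (phi0 u0) has_real_derivative - ((u2 y * u0 y - u1 y * u1 y) / (u0 y * u0 y))) (at y)"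
    by (rule has_field_derivative_transform_within_open[of _ _ _ "{\<xi>0<..}"]) (use y dP in auto)
  then show "(deriv (phi0 u0) has_real_derivative deriv (deriv (phi0 u0)) y) (at y)"
    using DERIV_imp_deriv by fastforce
qed

section \<open>The differential inequality at a point\<close>

(* Fx and Fxx are the first two derivatives of wexponent composed with a function P at a point
   where 1 + P = E, P' = Px and P'' = Pxx (see wexponent_comp_has_second_derivative). *)
lemma second_order_terms_bound:
  fixes F E Px Pxx \<delta> \<alpha> :: real
  assumes \<alpha>: "\<alpha> > 0" and F: "F \<ge> 1" and E: "E \<ge> 1" and \<delta>: "\<delta> \<ge> 0"
    and Px: "\<bar>Px\<bar> * E powr \<alpha> \<le> \<delta>" and Pxx: "\<bar>Pxx\<bar> \<le> \<delta> * \<bar>Px\<bar>"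
    and Fx: "Fx = F powr (- \<alpha>) * E powr \<alpha> * Px"
    and Fxx: "Fxx = (- \<alpha> * F powr (- \<alpha> - 1) * Fx) * E powr \<alpha> * Px
        + F powr (- \<alpha>) * (\<alpha> * E powr (\<alpha> - 1) * Px) * Px
        + F powr (- \<alpha>) * E powr \<alpha> * Pxx"
  shows "Fx\<^sup>2 + \<bar>Fxx\<bar> \<le> (2 + 2 * \<alpha>) * \<delta>\<^sup>2 * F powr (- \<alpha>)"
proof -
  define Fa where "Fa = F powr (- \<alpha>)"
  define q where "q = \<bar>Px\<bar> * E powr \<alpha>"
  have Fa: "0 < Fa" "Fa \<le> 1"
    unfolding Fa_def using F \<alpha> powr_mono[of "- \<alpha>" 0 F] by auto
  have Fa1: "0 < F powr (- \<alpha> - 1)" "F powr (- \<alpha> - 1) \<le> 1"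
    using F \<alpha> powr_mono[of "- \<alpha> - 1" 0 F] by auto
  have q: "0 \<le> q" "q \<le> \<delta>" "q\<^sup>2 \<le> \<delta>\<^sup>2"
    using Px by (auto simp: q_def power_mono)
  have "E powr (\<alpha> - 1) \<le> E powr (\<alpha> + \<alpha>)"
    using E \<alpha> by (intro powr_mono) auto
  also have "E powr (\<alpha> + \<alpha>) = (E powr \<alpha>)\<^sup>2"
    by (simp add: powr_add[symmetric] power2_eq_square)
  finally have E2: "E powr (\<alpha> - 1) * Px\<^sup>2 \<le> q\<^sup>2"
    by (simp add: q_def power_mult_distrib mult.commute mult_left_mono)
  have Fx_sq: "Fx\<^sup>2 = Fa\<^sup>2 * q\<^sup>2"
    by (simp add: Fx Fa_def q_def power_mult_distrib)
  have T1: "\<bar>(- \<alpha> * F powr (- \<alpha> - 1) * Fx) * E powr \<alpha> * Px\<bar> \<le> \<alpha> * Fa * \<delta>\<^sup>2"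
  proof -
    have "\<bar>(- \<alpha> * F powr (- \<alpha> - 1) * Fx) * E powr \<alpha> * Px\<bar> = \<alpha> * F powr (- \<alpha> - 1) * (Fa * q\<^sup>2)"
      using \<alpha> Fa1 by (simp add: Fx Fa_def q_def abs_mult power2_eq_square)
    also have "\<dots> \<le> \<alpha> * 1 * (Fa * \<delta>\<^sup>2)"
      using \<alpha> Fa Fa1 q by (intro mult_mono mult_left_mono) auto
    finally show ?thesis by simp
  qed
  have T2: "\<bar>F powr (- \<alpha>) * (\<alpha> * E powr (\<alpha> - 1) * Px) * Px\<bar> \<le> \<alpha> * Fa * \<delta>\<^sup>2"
  proof -
    have "\<bar>F powr (- \<alpha>) * (\<alpha> * E powr (\<alpha> - 1) * Px) * Px\<bar> = \<alpha> * Fa * (E powr (\<alpha> - 1) * Px\<^sup>2)"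
      using \<alpha> by (simp add: Fa_def abs_mult power2_eq_square)
    also have "\<dots> \<le> \<alpha> * Fa * \<delta>\<^sup>2"
      using \<alpha> Fa order_trans[OF E2 q(3)] by (intro mult_left_mono) auto
    finally show ?thesis .
  qed
  have T3: "\<bar>F powr (- \<alpha>) * E powr \<alpha> * Pxx\<bar> \<le> Fa * \<delta>\<^sup>2"
  proof -
    have "\<bar>F powr (- \<alpha>) * E powr \<alpha> * Pxx\<bar> \<le> Fa * (E powr \<alpha> * (\<delta> * \<bar>Px\<bar>))"
      using Pxx Fa by (simp add: Fa_def abs_mult mult_left_mono)
    also have "\<dots> = Fa * \<delta> * q" by (simp add: q_def)
    also have "\<dots> \<le> Fa * \<delta> * \<delta>"
      using Fa \<delta> q by (intro mult_left_mono) auto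
    finally show ?thesis by (simp add: power2_eq_square mult.assoc)
  qed
  have "Fx\<^sup>2 \<le> Fa * \<delta>\<^sup>2"
    unfolding Fx_sq using Fa q by (intro mult_mono) (auto simp: power2_eq_square)
  with T1 T2 T3 show ?thesis
    unfolding Fxx Fa_def[symmetric] by (simp add: algebra_simps)
qed

lemma f_gfun_exp_lower_bound:
  fixes f :: "real \<Rightarrow> real"
  assumes \<alpha>: "\<alpha> \<ge> 0" and r: "r > 0" and K: "0 \<le> K" "2 * K \<le> M"
    and F: "F \<ge> 1" and w: "w = exp (1 - F)" and M: "M > 0" "M * w \<le> 1 / 2" and s0: "w \<le> s0"
    and f_lower: "\<forall>s\<in>{0<..s0}. r * s / (1 + \<bar>ln s\<bar>) powr \<alpha> * (1 - K * s) \<le> f s"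
  shows "r * w * (1 - M * w) * (1 - M * w / 2) * (F + ln 2) powr (- \<alpha>) \<le> f (gfun M w)"
proof -
  define y where "y = M * w"
  define g where "g = w * (1 - y)"
  have y: "0 < y" "y \<le> 1 / 2"
    using M w by (auto simp: y_def)
  have g: "0 < g" "g \<le> w"
    using y w by (auto simp: g_def mult_le_cancel_left1)
  have "ln g = 1 - F + ln (1 - y)"
    using y w by (simp add: g_def ln_mult)
  moreover have "- ln 2 \<le> ln (1 - y)" "ln (1 - y) \<le> 0"
    using y ln_le_cancel_iff[of "1 / 2" "1 - y"] by (auto simp: ln_div)
  ultimately have "1 + \<bar>ln g\<bar> \<le> F + ln 2"
    using F by linarith
  then have "(F + ln 2) powr (- \<alpha>) \<le> 1 / (1 + \<bar>ln g\<bar>) powr \<alpha>"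
    using \<alpha> powr_mono2'[of "- \<alpha>" "1 + \<bar>ln g\<bar>" "F + ln 2"]
    by (simp add: powr_minus_divide add_pos_nonneg)
  moreover have "K * g \<le> y / 2"
  proof -
    have "K * g \<le> K * w"
      using K g by (simp add: mult_left_mono)
    also have "\<dots> \<le> y / 2"
      using K(2) mult_right_mono[of "2 * K" M w] w by (simp add: y_def)
    finally show ?thesis .
  qed
  ultimately have "r * g * (1 - y / 2) * (F + ln 2) powr (- \<alpha>) \<le> r * g * (1 - K * g) * (1 / (1 + \<bar>ln g\<bar>) powr \<alpha>)"
    using r g y by (intro mult_mono mult_left_mono) auto
  also have "\<dots> = r * g / (1 + \<bar>ln g\<bar>) powr \<alpha> * (1 - K * g)"
    by simp
  also have "\<dots> \<le> f g"
    using f_lower g s0 by auto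
  finally show ?thesis
    by (simp add: g_def y_def gfun_def)
qed

lemma subsolution_inequality:
  fixes w M \<rho> r Fa F\<theta> Fx Fxx :: real
  assumes r: "0 < r" and \<rho>: "3 * r \<le> 5 * \<rho>" and w: "0 < w" and Mw: "0 \<le> M * w" "M * w \<le> 1 / 2"
    and Fa: "0 < Fa" and \<theta>: "(\<rho> + r) / (2 * r) * Fa \<le> F\<theta>"
    and diffusion: "Fx\<^sup>2 + \<bar>Fxx\<bar> \<le> (r - \<rho>) / 2 * Fa"
    and reaction: "r * w * (1 - M * w) * (1 - M * w / 2) * F\<theta> \<le> fg"
  shows "(1 - 2 * M * w) * w * \<rho> * Fa - ((1 - 4 * M * w) * w * Fx\<^sup>2 - (1 - 2 * M * w) * w * Fxx) \<le> fg"
proof -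
  define y where "y = M * w"
  have "- (1 - 4 * y) * Fx\<^sup>2 \<le> Fx\<^sup>2"
    using Mw mult_right_mono[of "- (1 - 4 * y)" 1 "Fx\<^sup>2"] by (simp add: y_def)
  moreover have "(1 - 2 * y) * Fxx \<le> \<bar>Fxx\<bar>"
    using Mw abs_ge_self[of Fxx] mult_left_mono[of Fxx "\<bar>Fxx\<bar>" "1 - 2 * y"] mult_right_mono[of "1 - 2 * y" 1 "\<bar>Fxx\<bar>"]
    by (simp add: y_def)
  ultimately have "(1 - 2 * y) * \<rho> * Fa - (1 - 4 * y) * Fx\<^sup>2 + (1 - 2 * y) * Fxx
      \<le> (1 - 2 * y) * \<rho> * Fa + Fx\<^sup>2 + \<bar>Fxx\<bar>"
    by linarith
  also have "\<dots> \<le> Fa * ((1 - 2 * y) * \<rho> + (r - \<rho>) / 2)"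
    using diffusion by (simp add: algebra_simps)
  also have "\<dots> \<le> Fa * ((\<rho> + r) / 2 * ((1 - y) * (1 - y / 2)))"
  proof -
    have "0 \<le> y * (5 * \<rho> - 3 * r)"
      using Mw \<rho> by (simp add: y_def)
    then have "(1 - 2 * y) * \<rho> + (r - \<rho>) / 2 \<le> (\<rho> + r) / 2 * (1 - 3 / 2 * y)"
      by (simp add: field_simps)
    also have "\<dots> \<le> (\<rho> + r) / 2 * ((1 - 3 / 2 * y) + y\<^sup>2 / 2)"
      using r \<rho> by (intro mult_left_mono) auto
    also have "(1 - 3 / 2 * y) + y\<^sup>2 / 2 = (1 - y) * (1 - y / 2)"
      by (simp add: field_simps power2_eq_square)
    finally show ?thesis
      using Fa by (intro mult_left_mono) auto
  qed
  also have "\<dots> = r * ((1 - y) * (1 - y / 2)) * ((\<rho> + r) / (2 * r) * Fa)"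
    using r by (simp add: field_simps)
  also have "\<dots> \<le> r * ((1 - y) * (1 - y / 2)) * F\<theta>"
    using r Mw \<theta> by (intro mult_left_mono) (auto simp: y_def)
  finally have "w * ((1 - 2 * y) * \<rho> * Fa - (1 - 4 * y) * Fx\<^sup>2 + (1 - 2 * y) * Fxx)
      \<le> w * (r * ((1 - y) * (1 - y / 2)) * F\<theta>)"
    using w by (intro mult_left_mono) auto
  also have "w * (r * ((1 - y) * (1 - y / 2)) * F\<theta>) = r * w * (1 - M * w) * (1 - M * w / 2) * F\<theta>"
    by (simp add: y_def)
  finally show ?thesis
    using reaction by (simp add: y_def algebra_simps)
qed

lemma subsol_at_const:
  assumes "0 \<le> f c"
  shows "subsol_at f (\<lambda>_ _. c) t x"
  unfolding subsol_at_def using assms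
  by (intro exI[of _ 0] exI[of _ "\<lambda>_. 0"] conjI) (auto intro: DERIV_const)

lemma subsol_at_gfun_exp_wexponent:
  fixes f P p1 :: "real \<Rightarrow> real"
  assumes \<alpha>: "\<alpha> > 0" and r: "r > 0" and \<rho>: "3 * r \<le> 5 * \<rho>"
    and K: "0 \<le> K" "2 * K \<le> M" and M: "1 \<le> M" "1 / (2 * M) \<le> s0"
    and f_lower: "\<forall>s\<in>{0<..s0}. r * s / (1 + \<bar>ln s\<bar>) powr \<alpha> * (1 - K * s) \<le> f s"
    and S: "open S" "x \<in> S"
    and dP: "\<And>y. y \<in> S \<Longrightarrow> (P has_real_derivative p1 y) (at y)"
    and dp1: "(p1 has_real_derivative p2) (at x)"
    and front: "\<And>y. y \<in> S \<Longrightarrow> 0 < 1 + P y \<and> 0 < (1 + P y) powr (\<alpha> + 1) - \<rho> * (\<alpha> + 1) * t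
                                \<and> 1 + ln (2 * M) < wexponent \<alpha> \<rho> t (P y)"
    and flat: "0 \<le> P x" "\<bar>p1 x\<bar> * (1 + P x) powr \<alpha> \<le> \<delta>" "\<bar>p2\<bar> \<le> \<delta> * \<bar>p1 x\<bar>"
    and \<delta>: "0 \<le> \<delta>" "(2 + 2 * \<alpha>) * \<delta>\<^sup>2 \<le> (r - \<rho>) / 2"
    and \<theta>: "\<And>F. 1 + ln (2 * M) \<le> F \<Longrightarrow> (\<rho> + r) / (2 * r) * F powr (- \<alpha>) \<le> (F + ln 2) powr (- \<alpha>)"
  shows "subsol_at f (\<lambda>s y. gfun M (exp (1 - wexponent \<alpha> \<rho> s (P y)))) t x"
proof -
  define F where "F = (\<lambda>y. wexponent \<alpha> \<rho> t (P y))"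
  define Fx where "Fx = (\<lambda>y. F y powr (- \<alpha>) * (1 + P y) powr \<alpha> * p1 y)"
  define Fxx where "Fxx = (- \<alpha> * F x powr (- \<alpha> - 1) * Fx x) * (1 + P x) powr \<alpha> * p1 x
    + F x powr (- \<alpha>) * (\<alpha> * (1 + P x) powr (\<alpha> - 1) * p1 x) * p1 x
    + F x powr (- \<alpha>) * (1 + P x) powr \<alpha> * p2"
  define w where "w = exp (1 - F x)"
  have front_x: "0 < 1 + P x" "0 < (1 + P x) powr (\<alpha> + 1) - \<rho> * (\<alpha> + 1) * t" "1 + ln (2 * M) < F x"
    using front[OF S(2)] by (simp_all add: F_def)
  have dF: "(F has_real_derivative Fx y) (at y)" if "y \<in> S" for y
    unfolding F_def Fx_def using wexponent_comp_has_derivative[OF \<alpha> dP[OF that]] front[OF that] by simp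
  have dFx: "(Fx has_real_derivative Fxx) (at x)"
    unfolding Fx_def Fxx_def F_def using wexponent_comp_has_second_derivative[OF \<alpha> dP[OF S(2)] dp1] front_x by simp
  have Vt: "((\<lambda>s. gfun M (exp (1 - wexponent \<alpha> \<rho> s (P x)))) has_real_derivative
      (1 - 2 * M * w) * (- w * (- \<rho> * F x powr (- \<alpha>)))) (at t)"
    unfolding w_def F_def by (rule has_derivative_gfun_exp wexponent_has_derivative_time \<alpha> front_x)+
  have Vx: "\<forall>\<^sub>F y in nhds x. ((\<lambda>y. gfun M (exp (1 - F y))) has_real_derivative
      (1 - 2 * M * exp (1 - F y)) * (- exp (1 - F y) * Fx y)) (at y)"
    using eventually_nhds_in_open[OF S] by eventually_elim (rule has_derivative_gfun_exp[OF dF])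
  have Vxx: "((\<lambda>y. (1 - 2 * M * exp (1 - F y)) * (- exp (1 - F y) * Fx y)) has_real_derivative
      (1 - 4 * M * w) * w * (Fx x)\<^sup>2 - (1 - 2 * M * w) * w * Fxx) (at x)"
    unfolding w_def by (rule has_second_derivative_gfun_exp[OF dF[OF S(2)] dFx])
  have lnM: "0 \<le> ln (2 * M)"
    using M by simp
  then have F_ge_1: "1 \<le> F x"
    using front_x(3) by linarith
  have "w < exp (- ln (2 * M))"
    using front_x(3) by (simp add: w_def)
  also have "\<dots> = 1 / (2 * M)"
    using M by (simp add: exp_minus inverse_eq_divide)
  finally have w2M: "w < 1 / (2 * M)" .
  then have Mw: "0 < M * w" "M * w \<le> 1 / 2" "w \<le> s0"
    using M(1) order.trans[OF less_imp_le[OF w2M] M(2)] by (auto simp: w_def field_simps)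
  have "(Fx x)\<^sup>2 + \<bar>Fxx\<bar> \<le> (2 + 2 * \<alpha>) * \<delta>\<^sup>2 * F x powr (- \<alpha>)"
    using F_ge_1 flat \<delta>
    by (intro second_order_terms_bound[OF \<alpha>, where E = "1 + P x" and Px = "p1 x"])
      (auto simp: Fx_def Fxx_def)
  also have "\<dots> \<le> (r - \<rho>) / 2 * F x powr (- \<alpha>)"
    using \<delta>(2) by (intro mult_right_mono) auto
  finally have diffusion: "(Fx x)\<^sup>2 + \<bar>Fxx\<bar> \<le> (r - \<rho>) / 2 * F x powr (- \<alpha>)" .
  have reaction: "r * w * (1 - M * w) * (1 - M * w / 2) * (F x + ln 2) powr (- \<alpha>) \<le> f (gfun M w)"
    using \<alpha> M by (intro f_gfun_exp_lower_bound[OF _ r K F_ge_1 w_def _ Mw(2,3) f_lower]) auto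
  have "(1 - 2 * M * w) * w * \<rho> * F x powr (- \<alpha>)
      - ((1 - 4 * M * w) * w * (Fx x)\<^sup>2 - (1 - 2 * M * w) * w * Fxx) \<le> f (gfun M w)"
    using Mw F_ge_1 front_x(3)
    by (intro subsolution_inequality[OF r \<rho> _ _ _ _ \<theta> diffusion reaction]) (auto simp: w_def)
  then show ?thesis
    unfolding subsol_at_def using Vt Vx Vxx
    by (intro exI conjI) (auto simp: F_def w_def algebra_simps)
qed

section \<open>Asymptotics of the initial datum and the choice of M\<close>

lemma eventually_shifted_powr_ge:
  fixes \<alpha> c \<theta> :: real
  assumes "\<theta> < 1"
  shows "\<forall>\<^sub>F F in at_top. \<theta> * F powr (- \<alpha>) \<le> (F + c) powr (- \<alpha>)"
proof -
  have "((\<lambda>F::real. (F + c) / F) \<longlongrightarrow> 1) at_top"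
    by real_asymp
  from tendsto_powr[OF this tendsto_const, of "- \<alpha>"]
  have "((\<lambda>F. ((F + c) / F) powr (- \<alpha>)) \<longlongrightarrow> 1) at_top"
    by simp
  then have "\<forall>\<^sub>F F in at_top. \<theta> < ((F + c) / F) powr (- \<alpha>)"
    using assms by (rule order_tendstoD(1))
  moreover have "\<forall>\<^sub>F F in at_top. 0 < F \<and> 0 < F + c"
    using eventually_gt_at_top[of 0] eventually_gt_at_top[of "- c"] by eventually_elim auto
  ultimately show ?thesis
  proof eventually_elim
    case (elim F)
    then have "\<theta> * F powr (- \<alpha>) \<le> ((F + c) / F) powr (- \<alpha>) * F powr (- \<alpha>)"
      by (intro mult_right_mono) auto
    also have "\<dots> = (F + c) powr (- \<alpha>)"
      using elim by (simp add: powr_divide)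
    finally show ?case .
  qed
qed

lemma smallo_powr_imp_eventually_le:
  fixes d \<phi> :: "'a \<Rightarrow> real"
  assumes d: "d \<in> o[F](\<lambda>x. \<phi> x powr (- \<alpha>))" and \<phi>: "\<forall>\<^sub>F x in F. 1 \<le> \<phi> x"
    and \<alpha>: "0 \<le> \<alpha>" and \<delta>: "0 < \<delta>"
  shows "\<forall>\<^sub>F x in F. \<bar>d x\<bar> * (1 + \<phi> x) powr \<alpha> \<le> \<delta>"
proof -
  have "0 < \<delta> / 2 powr \<alpha>"
    using \<delta> by simp
  from landau_o.smallD[OF d this] \<phi> show ?thesis
  proof eventually_elim
    case (elim x)
    have "\<bar>d x\<bar> * (1 + \<phi> x) powr \<alpha> \<le> \<delta> / 2 powr \<alpha> * \<phi> x powr (- \<alpha>) * (2 * \<phi> x) powr \<alpha>"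
      using elim \<alpha> \<delta> by (intro mult_mono powr_mono2) auto
    also have "\<dots> = \<delta>"
      using elim by (simp add: powr_mult powr_minus field_simps)
    finally show ?case .
  qed
qed

lemma phi0_eventually_flat:
  assumes pos: "\<forall>x. 0 < u0 x" and lim: "(u0 \<longlongrightarrow> 0) at_top"
    and phi1: "deriv (phi0 u0) \<in> o[at_top](\<lambda>x. phi0 u0 x powr (- \<alpha>))"
    and phi2: "deriv (deriv (phi0 u0)) \<in> o[at_top](deriv (phi0 u0))"
    and \<alpha>: "0 \<le> \<alpha>" and \<delta>: "0 < \<delta>"
  shows "\<forall>\<^sub>F x in at_top. 1 \<le> phi0 u0 x
           \<and> \<bar>deriv (phi0 u0) x\<bar> * (1 + phi0 u0 x) powr \<alpha> \<le> \<delta>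
           \<and> \<bar>deriv (deriv (phi0 u0)) x\<bar> \<le> \<delta> * \<bar>deriv (phi0 u0) x\<bar>"
proof -
  have large: "\<forall>\<^sub>F x in at_top. 1 \<le> phi0 u0 x"
    using order_tendstoD(2)[OF lim exp_gt_zero[of "- 1"]]
  proof eventually_elim
    case (elim x)
    then have "ln (u0 x) < - 1"
      using pos ln_less_cancel_iff[of "u0 x" "exp (- 1)"] by simp
    then show ?case
      by (simp add: phi0_def)
  qed
  with smallo_powr_imp_eventually_le[OF phi1 large \<alpha> \<delta>] landau_o.smallD[OF phi2 \<delta>] show ?thesis
    by eventually_elim simp
qed

lemma Sup_level_set_less_imp:
  fixes u :: "real \<Rightarrow> real"
  assumes cont: "continuous_on UNIV u" and lim: "(u \<longlongrightarrow> 0) at_top"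
    and mono: "\<forall>x y. a \<le> x \<and> x \<le> y \<longrightarrow> u y \<le> u x" and X: "a \<le> X"
    and L: "0 < L" "L \<le> u X" and y: "Sup {x. u x = L} < y"
  shows "X < y" and "u y < L"
proof -
  obtain N where N: "X \<le> N" "u N < L"
    using eventually_conj[OF order_tendstoD(2)[OF lim L(1)] eventually_ge_at_top[of X]]
    by (auto simp: eventually_at_top_linorder)
  obtain y0 where y0: "X \<le> y0" "u y0 = L"
    using IVT2[of u N L X] N L cont continuous_on_eq_continuous_at by fastforce
  have bdd: "bdd_above {x. u x = L}"
  proof (rule bdd_aboveI)
    fix z assume "z \<in> {x. u x = L}"
    then show "z \<le> N"
      using mono[rule_format, of N z] X N by force
  qed
  have "y0 < y"
    using cSup_upper[OF _ bdd, of y0] y0 y by auto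
  then show "X < y"
    using y0 by simp
  have "u y \<noteq> L"
    using cSup_upper[OF _ bdd, of y] y by auto
  moreover have "u y \<le> u y0"
    using mono X y0 \<open>y0 < y\<close> by auto
  ultimately show "u y < L"
    using y0 by simp
qed

lemma wexponent_gt:
  fixes \<alpha> \<rho> t p q :: real
  assumes \<alpha>: "\<alpha> > 0" and q: "0 \<le> q" and \<rho>t: "0 \<le> \<rho> * t"
    and p: "((1 + q) powr (\<alpha> + 1) + \<rho> * (\<alpha> + 1) * t) powr (1 / (\<alpha> + 1)) < 1 + p"
  shows "0 < 1 + p" and "0 < (1 + p) powr (\<alpha> + 1) - \<rho> * (\<alpha> + 1) * t"
    and "1 + q < wexponent \<alpha> \<rho> t p"
proof -
  define B where "B = ((1 + q) powr (\<alpha> + 1) + \<rho> * (\<alpha> + 1) * t) powr (1 / (\<alpha> + 1))"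
  have B: "0 \<le> B" "B < 1 + p"
    using p by (simp_all add: B_def)
  then show "0 < 1 + p"
    by simp
  have "0 \<le> \<rho> * (\<alpha> + 1) * t"
    using mult_nonneg_nonneg[OF \<rho>t, of "\<alpha> + 1"] \<alpha> by (simp add: ac_simps)
  then have "B powr (\<alpha> + 1) = (1 + q) powr (\<alpha> + 1) + \<rho> * (\<alpha> + 1) * t"
    using \<alpha> by (simp add: B_def powr_powr add_nonneg_nonneg)
  moreover have "B powr (\<alpha> + 1) < (1 + p) powr (\<alpha> + 1)"
    using B \<alpha> by (intro powr_less_mono2) auto
  ultimately have \<psi>: "(1 + q) powr (\<alpha> + 1) < (1 + p) powr (\<alpha> + 1) - \<rho> * (\<alpha> + 1) * t"
    by simp
  then show "0 < (1 + p) powr (\<alpha> + 1) - \<rho> * (\<alpha> + 1) * t"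
    using powr_ge_zero[of "1 + q" "\<alpha> + 1"] by linarith
  have "1 + q = ((1 + q) powr (\<alpha> + 1)) powr (1 / (\<alpha> + 1))"
    using \<alpha> q by (simp add: powr_powr)
  also have "\<dots> < ((1 + p) powr (\<alpha> + 1) - \<rho> * (\<alpha> + 1) * t) powr (1 / (\<alpha> + 1))"
    using \<psi> \<alpha> q by (intro powr_less_mono2) auto
  finally show "1 + q < wexponent \<alpha> \<rho> t p"
    by (simp add: wexponent_def)
qed

lemma xMfun_less_imp:
  fixes u0 :: "real \<Rightarrow> real"
  assumes cont: "continuous_on UNIV u0" and pos: "\<forall>x. 0 < u0 x" and lim: "(u0 \<longlongrightarrow> 0) at_top"
    and mono: "\<forall>x y. \<xi>0 \<le> x \<and> x \<le> y \<longrightarrow> u0 y \<le> u0 x"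
    and X: "\<xi>0 \<le> X" "1 / (2 * M) \<le> u0 X" and M: "1 / 2 \<le> M"
    and \<alpha>: "0 < \<alpha>" and \<rho>t: "0 \<le> \<rho> * t"
    and y: "xMfun u0 \<alpha> \<rho> M t < y"
  shows "X < y" and "0 < 1 + phi0 u0 y" and "0 < (1 + phi0 u0 y) powr (\<alpha> + 1) - \<rho> * (\<alpha> + 1) * t"
    and "1 + ln (2 * M) < wexponent \<alpha> \<rho> t (phi0 u0 y)"
proof -
  define B where "B = ((1 + ln (2 * M)) powr (\<alpha> + 1) + \<rho> * (\<alpha> + 1) * t) powr (1 / (\<alpha> + 1))"
  have lnM: "0 \<le> ln (2 * M)"
    using M by simp
  have "0 \<le> \<rho> * (\<alpha> + 1) * t"
    using mult_nonneg_nonneg[OF \<rho>t, of "\<alpha> + 1"] \<alpha> by (simp add: ac_simps)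
  have "1 + ln (2 * M) = ((1 + ln (2 * M)) powr (\<alpha> + 1)) powr (1 / (\<alpha> + 1))"
    using \<alpha> lnM by (simp add: powr_powr)
  also have "\<dots> \<le> B"
    unfolding B_def using \<alpha> \<open>0 \<le> \<rho> * (\<alpha> + 1) * t\<close> by (intro powr_mono2) auto
  finally have "exp (1 - B) \<le> exp (- ln (2 * M))"
    by simp
  also have "\<dots> = 1 / (2 * M)"
    using M by (simp add: exp_minus inverse_eq_divide)
  finally have L: "exp (1 - B) \<le> u0 X"
    using X(2) by linarith
  have "Sup {x. u0 x = exp (1 - B)} < y"
    using y by (simp add: xMfun_def B_def)
  note level = Sup_level_set_less_imp[OF cont lim mono X(1) exp_gt_zero L this]
  then show "X < y"
    by simp
  have "ln (u0 y) < 1 - B"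
    using level(2) pos ln_less_cancel_iff[of "u0 y" "exp (1 - B)"] by simp
  then have "B < 1 + phi0 u0 y"
    by (simp add: phi0_def)
  then show "0 < 1 + phi0 u0 y" "0 < (1 + phi0 u0 y) powr (\<alpha> + 1) - \<rho> * (\<alpha> + 1) * t"
    "1 + ln (2 * M) < wexponent \<alpha> \<rho> t (phi0 u0 y)"
    using wexponent_gt[OF \<alpha> lnM \<rho>t] by (simp_all add: B_def)
qed

lemma subsol_at_gfun_wfun:
  fixes f u0 :: "real \<Rightarrow> real"
  assumes \<alpha>: "\<alpha> > 0" and r: "r > 0" and \<rho>: "3 * r \<le> 5 * \<rho>"
    and K: "0 \<le> K" "2 * K \<le> M" and M: "1 \<le> M" "1 / (2 * M) \<le> s0"
    and f_lower: "\<forall>s\<in>{0<..s0}. r * s / (1 + \<bar>ln s\<bar>) powr \<alpha> * (1 - K * s) \<le> f s"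
    and u0_cont: "continuous_on UNIV u0" and u0_pos: "\<forall>x. 0 < u0 x" and u0_lim: "(u0 \<longlongrightarrow> 0) at_top"
    and u0_d1: "\<forall>x\<in>{\<xi>0..}. (u0 has_real_derivative u1 x) (at x within {\<xi>0..})"
    and u0_d2: "\<forall>x\<in>{\<xi>0..}. (u1 has_real_derivative u2 x) (at x within {\<xi>0..})"
    and u0_noninc: "\<forall>x y. \<xi>0 \<le> x \<and> x \<le> y \<longrightarrow> u0 y \<le> u0 x"
    and X: "\<xi>0 < X" "1 / (2 * M) \<le> u0 X"
    and flat: "\<And>x. X \<le> x \<Longrightarrow> 1 \<le> phi0 u0 x
                 \<and> \<bar>deriv (phi0 u0) x\<bar> * (1 + phi0 u0 x) powr \<alpha> \<le> \<delta>
                 \<and> \<bar>deriv (deriv (phi0 u0)) x\<bar> \<le> \<delta> * \<bar>deriv (phi0 u0) x\<bar>"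
    and \<delta>: "0 \<le> \<delta>" "(2 + 2 * \<alpha>) * \<delta>\<^sup>2 \<le> (r - \<rho>) / 2"
    and \<theta>: "\<And>F. 1 + ln (2 * M) \<le> F \<Longrightarrow> (\<rho> + r) / (2 * r) * F powr (- \<alpha>) \<le> (F + ln 2) powr (- \<alpha>)"
    and t: "0 \<le> t" and x: "xMfun u0 \<alpha> \<rho> M t < x"
  shows "subsol_at f (\<lambda>s y. gfun M (wfun u0 \<alpha> \<rho> s y)) t x"
proof -
  let ?P = "phi0 u0"
  have "1 / 2 \<le> M" "0 \<le> \<rho> * t"
    using M(1) \<rho> r t by auto
  note beyond = xMfun_less_imp[OF u0_cont u0_pos u0_lim u0_noninc less_imp_le[OF X(1)] X(2) this(1) \<alpha> this(2)]
  have "X \<le> x"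
    using beyond(1)[OF x] by simp
  have "subsol_at f (\<lambda>s y. gfun M (exp (1 - wexponent \<alpha> \<rho> s (?P y)))) t x"
  proof (rule subsol_at_gfun_exp_wexponent[OF \<alpha> r \<rho> K M f_lower open_greaterThan])
    show "x \<in> {xMfun u0 \<alpha> \<rho> M t<..}"
      using x by simp
    show "(?P has_real_derivative deriv ?P y) (at y)" if "y \<in> {xMfun u0 \<alpha> \<rho> M t<..}" for y
      using beyond(1)[of y] that X(1) by (intro phi0_has_derivatives(1)[OF u0_d1 u0_d2 u0_pos]) auto
    show "(deriv ?P has_real_derivative deriv (deriv ?P) x) (at x)"
      using \<open>X \<le> x\<close> X(1) by (intro phi0_has_derivatives(2)[OF u0_d1 u0_d2 u0_pos]) auto
    show "0 < 1 + ?P y \<and> 0 < (1 + ?P y) powr (\<alpha> + 1) - \<rho> * (\<alpha> + 1) * t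
            \<and> 1 + ln (2 * M) < wexponent \<alpha> \<rho> t (?P y)" if "y \<in> {xMfun u0 \<alpha> \<rho> M t<..}" for y
      using beyond(2-4)[of y] that by auto
    show "0 \<le> ?P x" "\<bar>deriv ?P x\<bar> * (1 + ?P x) powr \<alpha> \<le> \<delta>"
      "\<bar>deriv (deriv ?P) x\<bar> \<le> \<delta> * \<bar>deriv ?P x\<bar>"
      using flat[OF \<open>X \<le> x\<close>] by auto
  qed (use \<delta> \<theta> in auto)
  then show ?thesis
    by (simp add: wfun_eq_exp_wexponent)
qed

theorem lemma3p4:
  fixes f f' :: "real \<Rightarrow> real" and u0 u1 u2 :: "real \<Rightarrow> real"
    and s0 K \<alpha> r \<xi>0 \<epsilon> \<rho> :: real
  assumes f_deriv: "\<forall>s\<in>{0..1}. (f has_real_derivative f' s) (at s within {0..1})"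
    and f'_cont: "continuous_on {0..1} f'"
    and f0: "f 0 = 0" and f1: "f 1 = 0"
    and fpos: "\<forall>s\<in>{0<..<1}. f s > 0"
    and f'1: "f' 1 < 0"
    and s0: "0 < s0" "s0 < 1" and K: "K \<ge> 0" and \<alpha>: "\<alpha> > 0" and r: "r > 0"
    and f_upper: "\<forall>s\<in>{0<..<1}. f s \<le> r * s / (1 + \<bar>ln s\<bar>) powr \<alpha>"
    and f_lower: "\<forall>s\<in>{0<..s0}. f s \<ge> r * s / (1 + \<bar>ln s\<bar>) powr \<alpha> * (1 - K * s)"
    and u0_range: "\<forall>x. 0 \<le> u0 x \<and> u0 x \<le> 1"
    and u0_uc: "uniformly_continuous_on UNIV u0"
    and u0_pos: "\<forall>x. u0 x > 0"
    and u0_liminf: "\<exists>c>0. \<forall>\<^sub>F x in at_bot. u0 x \<ge> c"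
    and u0_lim: "(u0 \<longlongrightarrow> 0) at_top"
    and \<xi>0: "\<xi>0 > 0"
    and u0_d1: "\<forall>x\<in>{\<xi>0..}. (u0 has_real_derivative u1 x) (at x within {\<xi>0..})"
    and u0_d2: "\<forall>x\<in>{\<xi>0..}. (u1 has_real_derivative u2 x) (at x within {\<xi>0..})"
    and u0_C2: "continuous_on {\<xi>0..} u2"
    and u0_noninc: "\<forall>x y. \<xi>0 \<le> x \<and> x \<le> y \<longrightarrow> u0 y \<le> u0 x"
    and phi1: "(\<lambda>x. deriv (phi0 u0) x) \<in> o[at_top](\<lambda>x. phi0 u0 x powr (- \<alpha>))"
    and phi2: "(\<lambda>x. deriv (deriv (phi0 u0)) x) \<in> o[at_top](\<lambda>x. deriv (phi0 u0) x)"
    and \<epsilon>: "\<epsilon> > 0"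
    and \<rho>: "max (r - \<epsilon> / 2) (3 / 4 * r) < \<rho>" "\<rho> < r"
  shows "\<exists>M. M \<ge> max (1 / (2 * Inf (u0 ` {..< max \<xi>0 (x0fun u0 \<alpha> \<rho> 0)}))) (1 / (4 * s0))
           \<and> (\<forall>t>0. \<forall>x. x \<le> xMfun u0 \<alpha> \<rho> M t \<longrightarrow> subsol_at f (\<lambda>_ _. 1 / (4 * M)) t x)
           \<and> (\<forall>t>0. \<forall>x. x > xMfun u0 \<alpha> \<rho> M t \<longrightarrow>
                  subsol_at f (\<lambda>s y. gfun M (wfun u0 \<alpha> \<rho> s y)) t x)"
proof -
  define \<delta> where "\<delta> = sqrt ((r - \<rho>) / (4 + 4 * \<alpha>))"
  have \<delta>: "0 < \<delta>" "(2 + 2 * \<alpha>) * \<delta>\<^sup>2 \<le> (r - \<rho>) / 2"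
    using \<rho>(2) \<alpha> by (auto simp: \<delta>_def field_simps)
  obtain X where X: "\<xi>0 < X"
    and flat: "\<And>x. X \<le> x \<Longrightarrow> 1 \<le> phi0 u0 x
                 \<and> \<bar>deriv (phi0 u0) x\<bar> * (1 + phi0 u0 x) powr \<alpha> \<le> \<delta>
                 \<and> \<bar>deriv (deriv (phi0 u0)) x\<bar> \<le> \<delta> * \<bar>deriv (phi0 u0) x\<bar>"
    using eventually_conj[OF phi0_eventually_flat[OF u0_pos u0_lim phi1 phi2 _ \<delta>(1)]
        eventually_gt_at_top[of \<xi>0]] \<alpha>
    by (auto simp: eventually_at_top_linorder)
  obtain Fs where \<theta>: "\<And>F. Fs \<le> F \<Longrightarrow> (\<rho> + r) / (2 * r) * F powr (- \<alpha>) \<le> (F + ln 2) powr (- \<alpha>)"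
    using eventually_shifted_powr_ge[of "(\<rho> + r) / (2 * r)" \<alpha> "ln 2"] \<rho> r
    by (auto simp: eventually_at_top_linorder)
  define M0 where "M0 = max (1 / (2 * Inf (u0 ` {..< max \<xi>0 (x0fun u0 \<alpha> \<rho> 0)}))) (1 / (4 * s0))"
  define M where "M = Max {M0, 1, 2 * K, 1 / (2 * s0), 1 / (2 * u0 X), exp \<bar>Fs\<bar>}"
  have M_ge: "z \<le> M" if "z \<in> {M0, 1, 2 * K, 1 / (2 * s0), 1 / (2 * u0 X), exp \<bar>Fs\<bar>}" for z
    unfolding M_def using that by (intro Max_ge) auto
  then have "1 \<le> M"
    by simp
  then have M: "1 \<le> M" "1 / (2 * M) \<le> s0" "1 / (2 * M) \<le> u0 X"
    using M_ge[of "1 / (2 * s0)"] M_ge[of "1 / (2 * u0 X)"] s0 u0_pos by (auto simp: field_simps)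
  have "\<bar>Fs\<bar> \<le> ln M"
    using M_ge[of "exp \<bar>Fs\<bar>"] ln_le_cancel_iff[of "exp \<bar>Fs\<bar>" M] M(1) by auto
  moreover have "ln M \<le> ln (2 * M)"
    using M(1) by simp
  ultimately have "Fs \<le> 1 + ln (2 * M)"
    by linarith
  show ?thesis
    unfolding M0_def[symmetric]
  proof (intro exI[of _ M] conjI allI impI)
    show "M0 \<le> M"
      using M_ge by simp
  next
    fix t x
    show "subsol_at f (\<lambda>_ _. 1 / (4 * M)) t x"
      using fpos M(1) by (intro subsol_at_const less_imp_le) auto
  next
    fix t x assume "0 < t" and "xMfun u0 \<alpha> \<rho> M t < x"
    then show "subsol_at f (\<lambda>s y. gfun M (wfun u0 \<alpha> \<rho> s y)) t x"
      using \<rho> \<delta> \<theta> \<open>Fs \<le> 1 + ln (2 * M)\<close> M_ge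
      by (intro subsol_at_gfun_wfun[OF \<alpha> r _ K _ M(1,2) f_lower
            uniformly_continuous_imp_continuous[OF u0_uc] u0_pos u0_lim u0_d1 u0_d2 u0_noninc X M(3) flat])
        auto
  qed
qed

end
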